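(* Let $p\ge2$ and $\delta>0$, and let $n$ be sufficiently large. Let $G$ be a graph on $n$ vertices and let $V(G)=V_1\cup\dots\cup V_p$ be a partition with $|E(V_1)|+\dots+|E(V_p)|<\delta^2n^2$. Then at most $2^{t(n,p)-1}$ orientations of $G$ are not relevant (with respect to this partition and $\delta$).
   Context: $E(V_i)$ is the set of edges of $G$ with both ends in $V_i$; $t(n,p)$ is the number of edges of the complete balanced $p$-partite graph on $n$ vertices. Given a partition $V(G)=V_1\cup\dots\cup V_p$ and $\delta>0$, an orientation $\vec G$ of $G$ is relevant if for every $i\neq j$ and all $X_1\subseteq V_i$, $X_2\subseteq V_j$ with $|X_1|,|X_2|>2\delta n$, there are at least $|X_1||X_2|/10$ edges of $\vec G$ directed from $X_1$ to $X_2$. *)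

theory Defs
  imports Complex_Main
begin

definition simple_graph :: "'a set \<Rightarrow> 'a set set \<Rightarrow> bool" where
  "simple_graph V E \<longleftrightarrow> finite V \<and> (\<forall>e\<in>E. e \<subseteq> V \<and> card e = 2)"

definition is_partition :: "'a set \<Rightarrow> nat \<Rightarrow> (nat \<Rightarrow> 'a set) \<Rightarrow> bool" where
  "is_partition V p P \<longleftrightarrow> (\<Union>i<p. P i) = V \<and>
     (\<forall>i<p. \<forall>j<p. i \<noteq> j \<longrightarrow> P i \<inter> P j = {})"

definition edges_in :: "'a set set \<Rightarrow> 'a set \<Rightarrow> 'a set set" where
  "edges_in E U = {e \<in> E. e \<subseteq> U}"

definition orientations :: "'a set set \<Rightarrow> ('a \<times> 'a) set set" where
  "orientations E = {D. (\<forall>(u,v)\<in>D. {u,v} \<in> E) \<and>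
     (\<forall>u v. {u,v} \<in> E \<longrightarrow> ((u,v) \<in> D \<longleftrightarrow> (v,u) \<notin> D))}"

text \<open>t(n,p): number of edges of the complete balanced p-partite graph on n vertices,
  realised on vertices 0..n-1 with part of i given by i mod p.\<close>
definition turan_num :: "nat \<Rightarrow> nat \<Rightarrow> nat" where
  "turan_num n p = card {(i,j). i < j \<and> j < n \<and> i mod p \<noteq> j mod p}"

definition relevant :: "nat \<Rightarrow> real \<Rightarrow> nat \<Rightarrow> (nat \<Rightarrow> 'a set) \<Rightarrow> ('a \<times> 'a) set \<Rightarrow> bool" where
  "relevant n \<delta> p P D \<longleftrightarrow>
     (\<forall>i<p. \<forall>j<p. i \<noteq> j \<longrightarrow>
       (\<forall>X1 X2. X1 \<subseteq> P i \<longrightarrow> X2 \<subseteq> P j \<longrightarrow>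
          real (card X1) > 2 * \<delta> * real n \<longrightarrow> real (card X2) > 2 * \<delta> * real n \<longrightarrow>
          real (card {(u,v) \<in> D. u \<in> X1 \<and> v \<in> X2}) \<ge> real (card X1) * real (card X2) / 10))"

end

theory Submission
  imports Defs "HOL-Analysis.Convex" "HOL-Real_Asymp.Real_Asymp"
begin

text \<open>Fix parts \<open>i \<noteq> j\<close> and sets \<open>X \<subseteq> V\<^sub>i\<close>, \<open>Y \<subseteq> V\<^sub>j\<close> of size \<open>> 2\<delta>n\<close>, and let \<open>B\<close> be the set of
  pairs between \<open>X\<close> and \<open>Y\<close>. Coding an orientation by the set of edges it directs along a
  reference direction (from \<open>X\<close> to \<open>Y\<close> on \<open>B\<close>), a weighted count shows that at most
  \<open>8\<^bsup>|X||Y|/10\<^esup> 2\<^bsup>|E - B|\<^esup> (9/8)\<^bsup>|E \<inter> B|\<^esup>\<close> orientations have fewer than \<open>|X||Y|/10\<close> arcs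
  from \<open>X\<close> to \<open>Y\<close>. As \<open>G\<close> has fewer than \<open>\<delta>\<^sup>2n\<^sup>2\<close> edges inside parts and a complete \<open>p\<close>-partite
  graph has at most \<open>t(n,p) + n/2\<close> edges, \<open>|E - B| < t(n,p) + n/2 + \<delta>\<^sup>2n\<^sup>2 - |X||Y|\<close>; with
  \<open>|X||Y| \<ge> 4\<delta>\<^sup>2n\<^sup>2\<close> the count is at most \<open>2\<^bsup>t(n,p) + n/2 - \<delta>\<^sup>2n\<^sup>2\<^esup>\<close>. A union bound over the
  \<open>4\<^sup>n\<close> pairs \<open>(X, Y)\<close> leaves \<open>2\<^bsup>t(n,p) + 5n/2 - \<delta>\<^sup>2n\<^sup>2\<^esup> \<le> 2\<^bsup>t(n,p) - 1\<^esup>\<close> for large \<open>n\<close>.\<close>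

definition cross_pairs :: "'a::linorder set \<Rightarrow> nat \<Rightarrow> (nat \<Rightarrow> 'a set) \<Rightarrow> ('a \<times> 'a) set" where
  "cross_pairs V p P = {(u,v) \<in> V \<times> V. u < v \<and> (\<forall>i<p. \<not> (u \<in> P i \<and> v \<in> P i))}"

lemma is_partitionD:
  assumes "is_partition V p P"
  shows "\<And>i. i < p \<Longrightarrow> P i \<subseteq> V"
    and "\<And>i j. i < p \<Longrightarrow> j < p \<Longrightarrow> i \<noteq> j \<Longrightarrow> P i \<inter> P j = {}"
    and "\<And>v. v \<in> V \<Longrightarrow> \<exists>i<p. v \<in> P i"
  using assms unfolding is_partition_def by blast+

lemma sum_card_partition:
  assumes "finite V" and "is_partition V p P"
  shows "(\<Sum>i<p. card (P i)) = card V"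
proof -
  have "card (\<Union>i<p. P i) = (\<Sum>i<p. card (P i))"
    using assms is_partitionD(1,2)[OF assms(2)] by (intro card_UN_disjoint) (auto intro: finite_subset)
  then show ?thesis
    using assms(2) by (simp add: is_partition_def)
qed

lemma card_cross_pairs:
  assumes "finite V" and part: "is_partition V p P"
  shows "2 * card (cross_pairs V p P) + (\<Sum>i<p. card (P i) ^ 2) = card V ^ 2"
proof -
  define C where "C = cross_pairs V p P"
  define S where "S = (\<Union>i<p. P i \<times> P i)"
  have finP: "finite (P i)" if "i < p" for i
    using is_partitionD(1)[OF part that] assms(1) by (rule finite_subset)
  have card_S: "card S = (\<Sum>i<p. card (P i) ^ 2)"
    unfolding S_def using finP is_partitionD(2)[OF part]
    by (subst card_UN_disjoint) (auto simp: card_cartesian_product power2_eq_square)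
  have V_split: "V \<times> V = S \<union> (C \<union> prod.swap ` C)"
  proof
    show "V \<times> V \<subseteq> S \<union> (C \<union> prod.swap ` C)"
    proof (rule subrelI)
      fix u v assume uv: "(u, v) \<in> V \<times> V"
      show "(u, v) \<in> S \<union> (C \<union> prod.swap ` C)"
      proof (cases "(u, v) \<in> S")
        case False
        then have apart: "\<forall>i<p. \<not> (u \<in> P i \<and> v \<in> P i)"
          by (auto simp: S_def)
        then have "u \<noteq> v"
          using is_partitionD(3)[OF part] uv by blast
        then consider "u < v" | "v < u" by fastforce
        then show ?thesis
          by cases (use uv apart in \<open>auto simp: C_def cross_pairs_def image_iff\<close>)
      qed simp
    qed
    show "S \<union> (C \<union> prod.swap ` C) \<subseteq> V \<times> V"
      using is_partitionD(1)[OF part] by (auto simp: S_def C_def cross_pairs_def)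
  qed
  have fin: "finite C" "finite S"
    using assms(1) finP by (auto simp: C_def cross_pairs_def S_def intro: finite_subset[of _ "V \<times> V"])
  have "card V ^ 2 = card S + card (C \<union> prod.swap ` C)"
    unfolding power2_eq_square card_cartesian_product[symmetric] V_split
    using fin by (intro card_Un_disjoint) (auto simp: S_def C_def cross_pairs_def)
  also have "card (C \<union> prod.swap ` C) = 2 * card C"
    using fin by (subst card_Un_disjoint) (auto simp: C_def cross_pairs_def card_image)
  finally show ?thesis
    using card_S by (simp add: C_def)
qed

lemma card_cross_pairs_le:
  assumes "finite V" and part: "is_partition V p P" and "p > 0"
  shows "2 * real (card (cross_pairs V p P)) \<le> real (card V) ^ 2 - real (card V) ^ 2 / real p"
proof -
  have "real (card V) ^ 2 = (\<Sum>i<p. 1 * real (card (P i))) ^ 2"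
    using sum_card_partition[OF assms(1,2)] by (simp flip: of_nat_sum)
  also have "\<dots> \<le> real p * (\<Sum>i<p. real (card (P i)) ^ 2)"
    using Cauchy_Schwarz_ineq_sum[of "\<lambda>_. 1" "\<lambda>i. real (card (P i))" "{..<p}"] by simp
  finally have "real (card V) ^ 2 / real p \<le> (\<Sum>i<p. real (card (P i)) ^ 2)"
    using \<open>p > 0\<close> by (simp add: divide_le_eq mult.commute)
  moreover have "2 * real (card (cross_pairs V p P)) + (\<Sum>i<p. real (card (P i)) ^ 2) = real (card V) ^ 2"
    using arg_cong[OF card_cross_pairs[OF assms(1,2)], of real] by simp
  ultimately show ?thesis by linarith
qed

text \<open>The residue classes modulo \<open>p\<close> form a partition of \<open>{0..<n}\<close> into parts of size at
  most \<open>n/p + 1\<close> whose cross pairs are exactly the pairs counted by \<^const>\<open>turan_num\<close>.\<close>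
lemma turan_num_ge:
  assumes "p > 0"
  shows "real n ^ 2 - real n ^ 2 / real p - real n \<le> 2 * real (turan_num n p)"
proof -
  define R where "R r = {i \<in> {0..<n}. i mod p = r}" for r
  have part: "is_partition {0..<n} p R"
    unfolding is_partition_def R_def using assms by auto
  have "turan_num n p = card (cross_pairs {0..<n} p R)"
    unfolding turan_num_def cross_pairs_def R_def using assms
    by (intro arg_cong[where f = card]) auto
  then have eq: "2 * real (turan_num n p) + (\<Sum>i<p. real (card (R i)) ^ 2) = real n ^ 2"
    using arg_cong[OF card_cross_pairs[OF _ part], of real] by simp
  have card_R: "card (R r) \<le> card {0..n div p}" for r
  proof (rule card_inj_on_le)
    show "inj_on (\<lambda>i. i div p) (R r)"
    proof (rule inj_onI)
      fix i j assume "i \<in> R r" "j \<in> R r" "i div p = j div p"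
      then show "i = j"
        using div_mult_mod_eq[of i p] div_mult_mod_eq[of j p] by (simp add: R_def)
    qed
  qed (auto simp: R_def intro!: div_le_mono)
  have "real (card (R r)) \<le> real (n div p) + 1" for r
    using of_nat_mono[OF card_R[of r], where 'a = real] by simp
  moreover have "real (n div p) \<le> real n / real p"
    by (rule of_nat_div_le_of_nat)
  ultimately have small: "real (card (R r)) \<le> real n / real p + 1" for r
    by (meson add_right_mono order_trans)
  have "(\<Sum>i<p. real (card (R i)) ^ 2) \<le> (\<Sum>i<p. (real n / real p + 1) * real (card (R i)))"
    using small by (intro sum_mono) (simp add: power2_eq_square mult_right_mono)
  also have "\<dots> = (real n / real p + 1) * real n"
    using sum_card_partition[OF _ part] by (simp flip: sum_distrib_left of_nat_sum)
  also have "\<dots> = real n ^ 2 / real p + real n"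
    using assms by (simp add: field_simps power2_eq_square)
  finally show ?thesis
    using eq by linarith
qed

lemma card_cross_pairs_le_turan_num:
  assumes "finite V" and "is_partition V p P" and "p > 0" and "card V = n"
  shows "real (card (cross_pairs V p P)) \<le> real (turan_num n p) + real n / 2"
proof -
  have "2 * real (card (cross_pairs V p P)) \<le> real n ^ 2 - real n ^ 2 / real p"
    using card_cross_pairs_le[OF assms(1-3)] assms(4) by simp
  then show ?thesis
    using turan_num_ge[OF assms(3), of n] by linarith
qed

lemma card_2_Min_Max:
  fixes e :: "'a::linorder set"
  assumes "card e = 2"
  shows "{Min e, Max e} = e" and "Min e < Max e"
proof -
  obtain x y where e: "e = {x, y}" "x \<noteq> y"
    using card_2_iff[THEN iffD1, OF assms] by blast
  then have "Min e = min x y" "Max e = max x y"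
    by simp_all
  with e show "{Min e, Max e} = e" "Min e < Max e"
    by (auto simp: min_def max_def)
qed

lemma card_le_card_cross_pairs:
  fixes V :: "'a::linorder set"
  assumes "finite V" and S: "\<And>e. e \<in> S \<Longrightarrow> e \<subseteq> V \<and> card e = 2 \<and> (\<forall>i<p. \<not> e \<subseteq> P i)"
  shows "card S \<le> card (cross_pairs V p P)"
proof (rule card_inj_on_le)
  show "inj_on (\<lambda>e. (Min e, Max e)) S"
  proof (rule inj_onI)
    fix e e' assume "e \<in> S" "e' \<in> S" and eq: "(Min e, Max e) = (Min e', Max e')"
    have "e = {Min e, Max e}"
      using S[OF \<open>e \<in> S\<close>] card_2_Min_Max(1)[of e] by simp
    also have "\<dots> = {Min e', Max e'}"
      using eq by simp
    also have "\<dots> = e'"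
      using S[OF \<open>e' \<in> S\<close>] card_2_Min_Max(1)[of e'] by simp
    finally show "e = e'" .
  qed
  show "(\<lambda>e. (Min e, Max e)) ` S \<subseteq> cross_pairs V p P"
  proof clarify
    fix e assume "e \<in> S"
    then have e: "e \<subseteq> V" "{Min e, Max e} = e" "Min e < Max e" "\<forall>i<p. \<not> e \<subseteq> P i"
      using S card_2_Min_Max[of e] by simp_all
    have "Min e \<in> {Min e, Max e}" "Max e \<in> {Min e, Max e}"
      by simp_all
    then have "Min e \<in> V" "Max e \<in> V"
      unfolding e(2) using e(1) by blast+
    moreover have "\<not> (Min e \<in> P i \<and> Max e \<in> P i)" if "i < p" for i
    proof
      assume "Min e \<in> P i \<and> Max e \<in> P i"
      then have "e \<subseteq> P i"
        by (subst e(2)[symmetric]) simp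
      with e(4) that show False
        by blast
    qed
    ultimately show "(Min e, Max e) \<in> cross_pairs V p P"
      unfolding cross_pairs_def using e(3) by blast
  qed
  show "finite (cross_pairs V p P)"
    using assms(1) by (auto simp: cross_pairs_def intro: finite_subset[of _ "V \<times> V"])
qed

lemma simple_graph_finite_edges:
  assumes "simple_graph V E"
  shows "finite E"
proof (rule finite_subset)
  show "E \<subseteq> Pow V" "finite (Pow V)"
    using assms by (auto simp: simple_graph_def)
qed

lemma orientations_subset:
  assumes "simple_graph V E" and "D \<in> orientations E"
  shows "D \<subseteq> V \<times> V"
  using assms unfolding simple_graph_def orientations_def by fastforce

lemma finite_orientations:
  assumes "simple_graph V E"
  shows "finite (orientations E)"
proof (rule finite_subset)
  show "orientations E \<subseteq> Pow (V \<times> V)"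
    using orientations_subset[OF assms] by blast
  show "finite (Pow (V \<times> V))"
    using assms by (simp add: simple_graph_def)
qed

lemma orientation_mem_iff:
  assumes "D \<in> orientations E" and "{u, v} \<in> E" and "r {u, v} \<in> {(u, v), (v, u)}"
  shows "(u, v) \<in> D \<longleftrightarrow> (r {u, v} \<in> D \<longleftrightarrow> r {u, v} = (u, v))"
proof (cases "r {u, v} = (u, v)")
  case False
  with assms(3) have "r {u, v} = (v, u)" by blast
  moreover have "(u, v) \<in> D \<longleftrightarrow> (v, u) \<notin> D"
    using assms(1,2) unfolding orientations_def by blast
  ultimately show ?thesis
    using False by simp
qed simp

lemma inj_on_orientation_code:
  assumes r: "\<And>e. e \<in> E \<Longrightarrow> e = {fst (r e), snd (r e)}"
  shows "inj_on (\<lambda>D. {e \<in> E. r e \<in> D}) (orientations E)"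
proof (rule inj_onI)
  fix D1 D2 assume D: "D1 \<in> orientations E" "D2 \<in> orientations E"
    and code: "{e \<in> E. r e \<in> D1} = {e \<in> E. r e \<in> D2}"
  show "D1 = D2"
  proof (rule set_eqI)
    fix x :: "'a \<times> 'a"
    obtain u v where x: "x = (u, v)" by fastforce
    show "x \<in> D1 \<longleftrightarrow> x \<in> D2"
    proof (cases "{u, v} \<in> E")
      case True
      then have "r {u, v} \<in> {(u, v), (v, u)}"
        using r[OF True] by (cases "r {u, v}") (auto simp: doubleton_eq_iff)
      moreover have "r {u, v} \<in> D1 \<longleftrightarrow> r {u, v} \<in> D2"
        using code True by blast
      ultimately show ?thesis
        unfolding x using orientation_mem_iff[OF D(1) True] orientation_mem_iff[OF D(2) True] by blast
    next
      case False
      then show ?thesis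
        using D unfolding x orientations_def by blast
    qed
  qed
qed

text \<open>Each subset \<open>T\<close> with fewer than \<open>s\<close> elements in \<open>F\<close> has weight
  \<open>b powr (s - card (T \<inter> F)) \<ge> 1\<close>, and the total weight factorises over \<open>E\<close>.\<close>
lemma card_subsets_small_Int:
  fixes b s :: real
  assumes "finite E" and "F \<subseteq> E" and "1 \<le> b"
  shows "real (card {T \<in> Pow E. real (card (T \<inter> F)) < s})
    \<le> b powr s * 2 ^ card (E - F) * (1 + 1 / b) ^ card F"
proof -
  define w where "w x = (if x \<in> F then 1 / b else 1)" for x
  have prod_w: "(\<Prod>x\<in>T. w x) = (1 / b) ^ card (T \<inter> F)" if "T \<subseteq> E" for T
    using finite_subset[OF that assms(1)]
    by (simp add: w_def prod.If_cases Int_def)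
  have "real (card {T \<in> Pow E. real (card (T \<inter> F)) < s}) = (\<Sum>T | T \<in> Pow E \<and> real (card (T \<inter> F)) < s. 1)"
    by simp
  also have "\<dots> \<le> (\<Sum>T\<in>Pow E. b powr s * (1 / b) ^ card (T \<inter> F))"
  proof (rule sum_le_included[where i = id])
    show "\<forall>T\<in>{T. T \<in> Pow E \<and> real (card (T \<inter> F)) < s}. \<exists>T'\<in>Pow E. id T' = T \<and> 1 \<le> b powr s * (1 / b) ^ card (T' \<inter> F)"
    proof
      fix T assume "T \<in> {T. T \<in> Pow E \<and> real (card (T \<inter> F)) < s}"
      then have "1 \<le> b powr (s - real (card (T \<inter> F)))"
        using assms(3) by (auto intro: ge_one_powr_ge_zero)
      also have "\<dots> = b powr s * (1 / b) ^ card (T \<inter> F)"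
        using assms(3) by (simp add: powr_diff powr_realpow power_one_over)
      finally show "\<exists>T'\<in>Pow E. id T' = T \<and> 1 \<le> b powr s * (1 / b) ^ card (T' \<inter> F)"
        using \<open>T \<in> _\<close> by auto
    qed
  qed (use assms in auto)
  also have "\<dots> = b powr s * (\<Sum>T\<in>Pow E. (\<Prod>x\<in>T. w x) * (\<Prod>x\<in>E - T. 1))"
    by (simp add: sum_distrib_left prod_w)
  also have "(\<Sum>T\<in>Pow E. (\<Prod>x\<in>T. w x) * (\<Prod>x\<in>E - T. 1)) = (\<Prod>x\<in>E. w x + 1)"
    by (rule prod_add[OF assms(1), symmetric])
  also have "\<dots> = (\<Prod>x\<in>E. if x \<in> F then 1 + 1 / b else 2)"
    by (rule prod.cong) (auto simp: w_def)
  also have "\<dots> = (\<Prod>x\<in>F. 1 + 1 / b) * (\<Prod>x\<in>E - F. 2)"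
    using assms(1,2) by (simp add: prod.If_cases Int_absorb1 Diff_eq)
  finally show ?thesis
    by (simp add: mult_ac)
qed

lemma edge_directions_exist:
  assumes "simple_graph V E"
  obtains r where "\<And>e. e \<in> E \<Longrightarrow> e = {fst (r e), snd (r e)}"
    and "\<And>e. e \<in> E \<inter> (\<lambda>(u, v). {u, v}) ` (X \<times> Y) \<Longrightarrow> fst (r e) \<in> X \<and> snd (r e) \<in> Y"
proof -
  define B where "B = (\<lambda>(u, v). {u, v}) ` (X \<times> Y)"
  have "\<forall>e\<in>E. \<exists>d. e = {fst d, snd d} \<and> (e \<in> B \<longrightarrow> fst d \<in> X \<and> snd d \<in> Y)"
  proof
    fix e assume "e \<in> E"
    show "\<exists>d. e = {fst d, snd d} \<and> (e \<in> B \<longrightarrow> fst d \<in> X \<and> snd d \<in> Y)"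
    proof (cases "e \<in> B")
      case False
      have "card e = 2"
        using assms \<open>e \<in> E\<close> by (simp add: simple_graph_def)
      then obtain u v where "e = {u, v}"
        using card_2_iff[THEN iffD1] by blast
      with False show ?thesis
        by (intro exI[of _ "(u, v)"]) simp
    qed (force simp: B_def)
  qed
  from bchoice[OF this] obtain r
    where r: "\<forall>e\<in>E. e = {fst (r e), snd (r e)} \<and> (e \<in> B \<longrightarrow> fst (r e) \<in> X \<and> snd (r e) \<in> Y)" ..
  show ?thesis
  proof (rule that)
    show "e = {fst (r e), snd (r e)}" if "e \<in> E" for e
      using r that by simp
    show "fst (r e) \<in> X \<and> snd (r e) \<in> Y" if "e \<in> E \<inter> (\<lambda>(u, v). {u, v}) ` (X \<times> Y)" for e
      using r that unfolding B_def by (meson IntD1 IntD2)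
  qed
qed

text \<open>An orientation with few arcs from \<open>X\<close> to \<open>Y\<close> is coded injectively by the set of edges
  it directs along a fixed reference direction, which points from \<open>X\<close> to \<open>Y\<close> on the edges
  between them; this code contains few of those edges.\<close>
lemma card_orientations_few_arcs:
  fixes X Y :: "'a set" and s b :: real
  assumes G: "simple_graph V E" and "1 \<le> b"
  defines "B \<equiv> (\<lambda>(u, v). {u, v}) ` (X \<times> Y)"
  shows "real (card {D \<in> orientations E. real (card {(u, v) \<in> D. u \<in> X \<and> v \<in> Y}) < s})
    \<le> b powr s * 2 ^ card (E - B) * (1 + 1 / b) ^ card (E \<inter> B)"
proof -
  obtain r where r: "\<And>e. e \<in> E \<Longrightarrow> e = {fst (r e), snd (r e)}"
    and r_B: "\<And>e. e \<in> E \<inter> B \<Longrightarrow> fst (r e) \<in> X \<and> snd (r e) \<in> Y"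
    using edge_directions_exist[OF G, of X Y] unfolding B_def by blast
  define arcs where "arcs D = {(u, v) \<in> D. u \<in> X \<and> v \<in> Y}" for D :: "('a \<times> 'a) set"
  define code where "code D = {e \<in> E. r e \<in> D}" for D
  have finE: "finite E"
    using G by (rule simple_graph_finite_edges)
  have few_in: "card (code D \<inter> (E \<inter> B)) \<le> card (arcs D)" if D: "D \<in> orientations E" for D
  proof (rule card_inj_on_le)
    show "inj_on r (code D \<inter> (E \<inter> B))"
    proof (rule inj_onI)
      fix e e' assume "e \<in> code D \<inter> (E \<inter> B)" "e' \<in> code D \<inter> (E \<inter> B)" and eq: "r e = r e'"
      then have "e \<in> E" "e' \<in> E"
        by blast+
      have "e = {fst (r e), snd (r e)}"
        by (rule r) fact
      also have "\<dots> = e'"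
        unfolding eq by (rule r [symmetric]) fact
      finally show "e = e'" .
    qed
    show "r ` (code D \<inter> (E \<inter> B)) \<subseteq> arcs D"
      using r_B by (force simp: code_def arcs_def)
    show "finite (arcs D)"
      using finite_subset[OF orientations_subset[OF G D]] G
      by (auto simp: simple_graph_def arcs_def intro: finite_subset[of _ D])
  qed
  define Bad where "Bad = {D \<in> orientations E. real (card (arcs D)) < s}"
  have "code ` Bad \<subseteq> {T \<in> Pow E. real (card (T \<inter> (E \<inter> B))) < s}"
    using few_in by (force simp: Bad_def code_def)
  moreover have "inj_on code Bad"
    using inj_on_orientation_code[of E r] r unfolding code_def Bad_def
    by (auto intro: inj_on_subset)
  ultimately have "card Bad \<le> card {T \<in> Pow E. real (card (T \<inter> (E \<inter> B))) < s}"
    using finE by (intro card_inj_on_le) auto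
  also have "real \<dots> \<le> b powr s * 2 ^ card (E - E \<inter> B) * (1 + 1 / b) ^ card (E \<inter> B)"
    using finE assms(2) by (intro card_subsets_small_Int) auto
  also have "E - E \<inter> B = E - B"
    by blast
  finally show ?thesis
    by (simp add: Bad_def arcs_def)
qed

lemma card_doubletons:
  assumes "X \<inter> Y = {}"
  shows "card ((\<lambda>(u, v). {u, v}) ` (X \<times> Y)) = card X * card Y"
proof -
  have "inj_on (\<lambda>(u, v). {u, v}) (X \<times> Y)"
    using assms by (auto simp: inj_on_def doubleton_eq_iff)
  then show ?thesis
    by (simp add: card_image card_cartesian_product)
qed

text \<open>Edges lying in no part and not between \<open>X\<close> and \<open>Y\<close>, together with all pairs between
  \<open>X\<close> and \<open>Y\<close>, form disjoint families of two-element sets lying in no part.\<close>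
lemma card_edges_not_between_le:
  fixes V :: "'a::linorder set"
  assumes G: "simple_graph V E" and part: "is_partition V p P"
    and ij: "i < p" "j < p" "i \<noteq> j" and XY: "X \<subseteq> P i" "Y \<subseteq> P j"
  defines "B \<equiv> (\<lambda>(u, v). {u, v}) ` (X \<times> Y)"
  shows "card (E - B) + card X * card Y \<le> (\<Sum>k<p. card (edges_in E (P k))) + card (cross_pairs V p P)"
proof -
  define Ein where "Ein = (\<Union>k<p. edges_in E (P k))"
  have finV: "finite V" and edge: "\<And>e. e \<in> E \<Longrightarrow> e \<subseteq> V \<and> card e = 2"
    using G by (auto simp: simple_graph_def)
  have finE: "finite E"
    using G by (rule simple_graph_finite_edges)
  have XY_disj: "X \<inter> Y = {}"
    using is_partitionD(2)[OF part ij] XY by blast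
  have XY_V: "X \<subseteq> V" "Y \<subseteq> V"
    using XY is_partitionD(1)[OF part] ij by blast+
  have "card ((E - Ein - B) \<union> B) \<le> card (cross_pairs V p P)"
  proof (rule card_le_card_cross_pairs[OF finV])
    fix e assume "e \<in> (E - Ein - B) \<union> B"
    then show "e \<subseteq> V \<and> card e = 2 \<and> (\<forall>k<p. \<not> e \<subseteq> P k)"
    proof
      assume "e \<in> E - Ein - B"
      then show ?thesis
        using edge by (auto simp: Ein_def edges_in_def)
    next
      assume "e \<in> B"
      then obtain u v where uv: "e = {u, v}" "u \<in> X" "v \<in> Y"
        by (auto simp: B_def)
      have "\<not> e \<subseteq> P k" if "k < p" for k
        using is_partitionD(2)[OF part that ij(1)] is_partitionD(2)[OF part that ij(2)] ij(3) uv XY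
        by blast
      moreover have "u \<noteq> v"
        using uv XY_disj by blast
      ultimately show ?thesis
        using uv XY_V by auto
    qed
  qed
  moreover have "card ((E - Ein - B) \<union> B) = card (E - Ein - B) + card X * card Y"
    using finE card_doubletons[OF XY_disj] finite_subset[OF XY_V(1) finV] finite_subset[OF XY_V(2) finV]
    by (subst card_Un_disjoint) (auto simp: B_def)
  moreover have "card (E - B) \<le> card Ein + card (E - Ein - B)"
    using card_Un_le[of Ein "E - Ein - B"] card_mono[of "Ein \<union> (E - Ein - B)" "E - B"] finE
    by (fastforce simp: Ein_def edges_in_def)
  moreover have "card Ein \<le> (\<Sum>k<p. card (edges_in E (P k)))"
    unfolding Ein_def by (rule card_UN_le) simp
  ultimately show ?thesis
    by linarith
qed

lemma powr_fifth_power: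
  "((2 :: real) powr (1 / 5)) ^ k = 2 powr (real k / 5)"
proof -
  have "((2 :: real) powr (1 / 5)) ^ k = (2 powr (1 / 5)) powr real k"
    by (rule powr_realpow [symmetric]) simp
  also have "\<dots> = 2 powr (real k / 5)"
    by (simp add: powr_powr)
  finally show ?thesis .
qed

lemma nine_eighths_power_le:
  "(9 / 8 :: real) ^ k \<le> 2 powr (real k / 5)"
proof -
  have "(9 / 8 :: real) ^ 5 \<le> (2 powr (1 / 5)) ^ 5"
    unfolding powr_fifth_power by (simp add: power_divide)
  then have "9 / 8 \<le> (2 :: real) powr (1 / 5)"
    by (subst (asm) power_mono_iff) auto
  then have "(9 / 8 :: real) ^ k \<le> (2 powr (1 / 5)) ^ k"
    by (rule power_mono) simp
  then show ?thesis
    unfolding powr_fifth_power .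
qed

lemma few_arcs_bound_le:
  fixes A D T :: real
  assumes "real f \<le> A" and "real g \<le> T + D - A" and "4 * D \<le> A"
  shows "8 powr (A / 10) * 2 ^ g * (9 / 8) ^ f \<le> 2 powr (T - D)"
proof -
  have "(8 :: real) powr (A / 10) = (2 powr 3) powr (A / 10)"
    by simp
  also have "\<dots> = 2 powr (3 * A / 10)"
    unfolding powr_powr by simp
  finally have "8 powr (A / 10) * 2 ^ g * (9 / 8) ^ f \<le> 2 powr (3 * A / 10) * 2 powr real g * 2 powr (real f / 5)"
    using nine_eighths_power_le[of f] by (simp add: powr_realpow mult_left_mono)
  also have "\<dots> = 2 powr (3 * A / 10 + real g + real f / 5)"
    by (simp add: powr_add)
  also have "\<dots> \<le> 2 powr (T - D)"
    using assms by simp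
  finally show ?thesis .
qed

lemma card_orientations_few_arcs_between_parts:
  fixes V :: "'a::linorder set" and \<delta> :: real
  assumes G: "simple_graph V E" and part: "is_partition V p P" and "p > 0"
    and ij: "i < p" "j < p" "i \<noteq> j" and XY: "X \<subseteq> P i" "Y \<subseteq> P j"
    and n: "card V = n" and "0 \<le> \<delta>"
    and inside: "real (\<Sum>k<p. card (edges_in E (P k))) < \<delta>\<^sup>2 * real n ^ 2"
    and large: "2 * \<delta> * real n < real (card X)" "2 * \<delta> * real n < real (card Y)"
  shows "real (card {D \<in> orientations E.
            real (card {(u, v) \<in> D. u \<in> X \<and> v \<in> Y}) < real (card X) * real (card Y) / 10})
    \<le> 2 powr (real (turan_num n p) + real n / 2 - \<delta>\<^sup>2 * real n ^ 2)"
proof -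
  define B where "B = (\<lambda>(u, v). {u, v}) ` (X \<times> Y)"
  define A where "A = real (card X) * real (card Y)"
  define f where "f = card (E \<inter> B)"
  define g where "g = card (E - B)"
  have finV: "finite V"
    using G by (simp add: simple_graph_def)
  have XY_V: "X \<subseteq> V" "Y \<subseteq> V"
    using XY is_partitionD(1)[OF part] ij by blast+
  have "real f \<le> real (card B)"
    unfolding f_def using finite_subset[OF XY_V(1) finV] finite_subset[OF XY_V(2) finV]
    by (intro of_nat_mono card_mono) (auto simp: B_def)
  also have "card B = card X * card Y"
    unfolding B_def using is_partitionD(2)[OF part ij] XY by (intro card_doubletons) blast
  finally have f_le: "real f \<le> A"
    by (simp add: A_def)
  have "real (g + card X * card Y) \<le> real ((\<Sum>k<p. card (edges_in E (P k))) + card (cross_pairs V p P))"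
    unfolding g_def B_def by (intro of_nat_mono card_edges_not_between_le[OF G part ij XY])
  then have "real g + A \<le> real (\<Sum>k<p. card (edges_in E (P k))) + real (card (cross_pairs V p P))"
    by (simp add: A_def)
  then have g_le: "real g \<le> (real (turan_num n p) + real n / 2) + \<delta>\<^sup>2 * real n ^ 2 - A"
    using inside card_cross_pairs_le_turan_num[OF finV part \<open>p > 0\<close> n] by linarith
  have "(2 * \<delta> * real n) * (2 * \<delta> * real n) \<le> A"
    unfolding A_def using large \<open>0 \<le> \<delta>\<close> by (intro mult_mono) auto
  then have A_ge: "4 * (\<delta>\<^sup>2 * real n ^ 2) \<le> A"
    by (simp add: power2_eq_square mult_ac)
  have "real (card {D \<in> orientations E.
            real (card {(u, v) \<in> D. u \<in> X \<and> v \<in> Y}) < A / 10})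
    \<le> 8 powr (A / 10) * 2 ^ g * (1 + 1 / 8) ^ f"
    unfolding f_def g_def B_def by (rule card_orientations_few_arcs[OF G]) simp
  also have "\<dots> \<le> 2 powr (real (turan_num n p) + real n / 2 - \<delta>\<^sup>2 * real n ^ 2)"
    using few_arcs_bound_le[OF f_le g_le A_ge] by simp
  finally show ?thesis
    by (simp add: A_def)
qed

lemma real_card_UN_le:
  assumes "finite I" and "\<And>i. i \<in> I \<Longrightarrow> real (card (A i)) \<le> b"
  shows "real (card (\<Union> (A ` I))) \<le> real (card I) * b"
proof -
  have "real (card (\<Union> (A ` I))) \<le> (\<Sum>i\<in>I. real (card (A i)))"
    using card_UN_le[OF assms(1), of A] by (simp flip: of_nat_sum)
  also have "\<dots> \<le> real (card I) * b"
    using assms(2) by (rule sum_bounded_above)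
  finally show ?thesis .
qed

lemma card_not_relevant_le:
  fixes V :: "'a::linorder set" and \<delta> :: real
  assumes G: "simple_graph V E" and part: "is_partition V p P" and "p > 0"
    and n: "card V = n" and "0 \<le> \<delta>"
    and inside: "real (\<Sum>k<p. card (edges_in E (P k))) < \<delta>\<^sup>2 * real n ^ 2"
  shows "real (card {D \<in> orientations E. \<not> relevant n \<delta> p P D})
    \<le> 4 ^ n * 2 powr (real (turan_num n p) + real n / 2 - \<delta>\<^sup>2 * real n ^ 2)"
proof -
  define bound where "bound = 2 powr (real (turan_num n p) + real n / 2 - \<delta>\<^sup>2 * real n ^ 2)"
  define few where "few = (\<lambda>(X, Y). {D \<in> orientations E.
    real (card {(u, v) \<in> D. u \<in> X \<and> v \<in> Y}) < real (card X) * real (card Y) / 10})"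
  define I where "I = {(X, Y). \<exists>i<p. \<exists>j<p. i \<noteq> j \<and> X \<subseteq> P i \<and> Y \<subseteq> P j \<and>
    2 * \<delta> * real n < real (card X) \<and> 2 * \<delta> * real n < real (card Y)}"
  have finV: "finite V"
    using G by (simp add: simple_graph_def)
  have I_sub: "I \<subseteq> Pow V \<times> Pow V"
    using is_partitionD(1)[OF part] by (fastforce simp: I_def)
  have "{D \<in> orientations E. \<not> relevant n \<delta> p P D} \<subseteq> \<Union> (few ` I)"
  proof (rule subsetI)
    fix D assume "D \<in> {D \<in> orientations E. \<not> relevant n \<delta> p P D}"
    then obtain i j X Y where "D \<in> orientations E" "i < p" "j < p" "i \<noteq> j" "X \<subseteq> P i" "Y \<subseteq> P j"
      "2 * \<delta> * real n < real (card X)" "2 * \<delta> * real n < real (card Y)"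
      "\<not> real (card X) * real (card Y) / 10 \<le> real (card {(u, v) \<in> D. u \<in> X \<and> v \<in> Y})"
      unfolding relevant_def by blast
    then have "(X, Y) \<in> I" "D \<in> few (X, Y)"
      by (auto simp: I_def few_def)
    then show "D \<in> \<Union> (few ` I)"
      by blast
  qed
  moreover have "\<Union> (few ` I) \<subseteq> orientations E"
    by (auto simp: few_def)
  ultimately have "real (card {D \<in> orientations E. \<not> relevant n \<delta> p P D}) \<le> real (card (\<Union> (few ` I)))"
    using finite_orientations[OF G] by (intro of_nat_mono card_mono) (auto intro: finite_subset)
  also have "\<dots> \<le> real (card I) * bound"
  proof (rule real_card_UN_le)
    show "finite I"
      using finite_subset[OF I_sub] finV by simp
    fix q assume "q \<in> I"
    then obtain X Y i j where "q = (X, Y)" "i < p" "j < p" "i \<noteq> j" "X \<subseteq> P i" "Y \<subseteq> P j"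
      "2 * \<delta> * real n < real (card X)" "2 * \<delta> * real n < real (card Y)"
      by (auto simp: I_def)
    then show "real (card (few q)) \<le> bound"
      unfolding few_def bound_def
      using card_orientations_few_arcs_between_parts[OF G part \<open>p > 0\<close> _ _ _ _ _ n \<open>0 \<le> \<delta>\<close> inside]
      by simp
  qed
  also have "\<dots> \<le> real (card (Pow V \<times> Pow V)) * bound"
    using I_sub finV by (intro mult_right_mono of_nat_mono card_mono) (auto simp: bound_def)
  also have "\<dots> = 4 ^ n * bound"
    using finV n by (simp add: card_cartesian_product card_Pow flip: power_mult_distrib)
  finally show ?thesis
    by (simp add: bound_def)
qed

lemma eventually_powr_quadratic_ge:
  fixes c C :: real
  assumes "c > 0"
  shows "\<forall>\<^sub>F n in sequentially. C * 2 powr (5 / 2 * real n) \<le> 2 powr (c * real n ^ 2)"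
  using assms by real_asymp

lemma four_power_eq_powr: "(4 :: real) ^ n = 2 powr (2 * real n)"
proof -
  have "(4 :: real) ^ n = 2 ^ (2 * n)"
    by (simp add: power_mult)
  also have "\<dots> = 2 powr real (2 * n)"
    by (rule powr_realpow [symmetric]) simp
  finally show ?thesis
    by simp
qed

theorem mainTheorem9:
  fixes p :: nat and \<delta> :: real
  assumes "p \<ge> 2" and "\<delta> > 0"
  shows "\<exists>N. \<forall>n \<ge> N. \<forall>(V :: nat set) E P.
           simple_graph V E \<longrightarrow> card V = n \<longrightarrow> is_partition V p P \<longrightarrow>
           real (\<Sum>i<p. card (edges_in E (P i))) < \<delta>^2 * real n ^ 2 \<longrightarrow>
           card {D \<in> orientations E. \<not> relevant n \<delta> p P D} \<le> 2 ^ (turan_num n p - 1)"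
proof -
  obtain N where N: "\<And>n. n \<ge> N \<Longrightarrow> 2 * 2 powr (5 / 2 * real n) \<le> 2 powr (\<delta>\<^sup>2 * real n ^ 2)"
    using eventually_powr_quadratic_ge[of "\<delta>\<^sup>2" 2] \<open>\<delta> > 0\<close> by (auto simp: eventually_sequentially)
  show ?thesis
  proof (intro exI[of _ N] allI impI)
    fix n :: nat and V :: "nat set" and E P
    assume "n \<ge> N" and G: "simple_graph V E" and n: "card V = n" and part: "is_partition V p P"
      and inside: "real (\<Sum>i<p. card (edges_in E (P i))) < \<delta>^2 * real n ^ 2"
    define t where "t = turan_num n p"
    have "real (card {D \<in> orientations E. \<not> relevant n \<delta> p P D})
        \<le> 4 ^ n * 2 powr (real t + real n / 2 - \<delta>\<^sup>2 * real n ^ 2)"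
      unfolding t_def using assms by (intro card_not_relevant_le[OF G part _ n _ inside]) auto
    also have "\<dots> = 2 powr (real t + 5 / 2 * real n - \<delta>\<^sup>2 * real n ^ 2)"
      unfolding four_power_eq_powr powr_add [symmetric] by (simp add: algebra_simps)
    also have "\<dots> = 2 powr real t * (2 powr (5 / 2 * real n) / 2 powr (\<delta>\<^sup>2 * real n ^ 2))"
      by (simp add: powr_add powr_diff)
    also have "\<dots> \<le> 2 powr real t / 2"
      using N[OF \<open>n \<ge> N\<close>] by (simp add: divide_le_eq)
    also have "\<dots> = 2 ^ t / 2"
      by (simp add: powr_realpow)
    also have "\<dots> \<le> 2 ^ (t - 1)"
      by (cases t) simp_all
    finally show "card {D \<in> orientations E. \<not> relevant n \<delta> p P D} \<le> 2 ^ (turan_num n p - 1)"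
      unfolding t_def by (metis of_nat_le_iff of_nat_numeral of_nat_power)
  qed
qed

end
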